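(* Let $k$ be a commutative ring, $A$ a commutative $k$-algebra, $(A,\mathfrak g_{A/k},\alpha)$ a Lie algebroid, and $S^\cdot=\bigoplus_{i\ge0}S^i$ a noetherian graded $\mathfrak g_{A/k}$-algebra which is semi-simple as a $\mathfrak g_{A/k}$-module and such that $\bar S^0=(S^0)^{\mathfrak g_{A/k}}$ is noetherian. Let $N$ be an $(S^0,\mathfrak g_{A/k})$-module which is of finite type over $S^0$ and semi-simple over $\mathfrak g_{A/k}$. Then the invariant module $\bar N=\{n\in N:\delta n=0\ \forall \delta\in\mathfrak g_{A/k}\}$ is of finite type over $\bar S^0$.
   Context: A Lie algebroid $(A,\mathfrak g_{A/k},\alpha)$: an $A$-module of finite type $\mathfrak g_{A/k}$ with a $k$-bilinear Lie bracket and a map $\alpha:\mathfrak g_{A/k}\to T_{A/k}$ (the $k$-derivations of $A$) which is a homomorphism of Lie algebras and $A$-modules, with $[\delta,a\eta]=\alpha(\delta)(a)\eta+a[\delta,\eta]$. A $\mathfrak g_{A/k}$-module is an $A$-module $M$ with a $k$-Lie algebra homomorphism $f:\mathfrak g_{A/k}\to\mathrm{End}_k(M)$ satisfying $f(a\delta)(m)=af(\delta)(m)$ and $f(\delta)(am)=\alpha(\delta)(a)m+af(\delta)(m)$; it is semi-simple if it is a direct sum of simple $\mathfrak g_{A/k}$-modules. A graded $\mathfrak g_{A/k}$-algebra is a graded commutative $A$-algebra $S^\cdot=\bigoplus_{i\ge0}S^i$ which is a $\mathfrak g_{A/k}$-module via an $A$-linear Lie algebra homomorphism $\phi:\mathfrak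 g_{A/k}\to T_{S^\cdot/k}$ preserving each $S^i$. An $(S^0,\mathfrak g_{A/k})$-module is an $S^0$-module $N$ which is also a $\mathfrak g_{A/k}$-module with $\delta(sn)=\delta(s)n+s\,\delta n$ for $s\in S^0$, $n\in N$. *)

theory Defs
  imports Main
begin

text \<open>The base ring is 'k,
the k-algebra A is 'a with structure map iota, the Lie algebroid g is a type 'g
(an A-module via gsc), the graded algebra S is a type 's with A-algebra map sigma
and homogeneous pieces Sgr i, and N is a type 'n with an action nsc of S (only
used for scalars from S^0).\<close>

definition ring_map :: "('r::comm_ring_1 \<Rightarrow> 't::comm_ring_1) \<Rightarrow> bool" where
  "ring_map f \<longleftrightarrow> f 1 = 1 \<and> (\<forall>x y. f (x + y) = f x + f y) \<and> (\<forall>x y. f (x * y) = f x * f y)"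

definition kder :: "('k::comm_ring_1 \<Rightarrow> 'b::comm_ring_1) \<Rightarrow> ('b \<Rightarrow> 'b) \<Rightarrow> bool" where
  "kder iota D \<longleftrightarrow> (\<forall>x y. D (x + y) = D x + D y) \<and> (\<forall>x y. D (x * y) = x * D y + y * D x)
     \<and> (\<forall>c x. D (iota c * x) = iota c * D x)"

definition module_on :: "'r::comm_ring_1 set \<Rightarrow> ('r \<Rightarrow> 'm::ab_group_add \<Rightarrow> 'm) \<Rightarrow> bool" where
  "module_on R sc \<longleftrightarrow> (\<forall>r\<in>R. \<forall>s\<in>R. \<forall>x. sc (r * s) x = sc r (sc s x))
     \<and> (\<forall>x. sc 1 x = x)
     \<and> (\<forall>r\<in>R. \<forall>s\<in>R. \<forall>x. sc (r + s) x = sc r x + sc s x)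
     \<and> (\<forall>r\<in>R. \<forall>x y. sc r (x + y) = sc r x + sc r y)"

definition fin_type_over :: "'r set \<Rightarrow> ('r \<Rightarrow> 'm::ab_group_add \<Rightarrow> 'm) \<Rightarrow> 'm set \<Rightarrow> bool" where
  "fin_type_over R sc V \<longleftrightarrow> (\<exists>F. finite F \<and> F \<subseteq> V \<and>
      V = {(\<Sum>f\<in>F. sc (r f) f) | r. \<forall>f\<in>F. r f \<in> R})"

definition dsum_decomp :: "('i \<Rightarrow> 'm::ab_group_add set) \<Rightarrow> 'i set \<Rightarrow> 'm set \<Rightarrow> bool" where
  "dsum_decomp M I V \<longleftrightarrow> (\<forall>i\<in>I. M i \<subseteq> V)
     \<and> (\<forall>v\<in>V. \<exists>F x. finite F \<and> F \<subseteq> I \<and> (\<forall>i\<in>F. x i \<in> M i) \<and> v = (\<Sum>i\<in>F. x i))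
     \<and> (\<forall>F x. finite F \<and> F \<subseteq> I \<and> (\<forall>i\<in>F. x i \<in> M i) \<and> (\<Sum>i\<in>F. x i) = 0
            \<longrightarrow> (\<forall>i\<in>F. x i = 0))"

definition ideal_of :: "'r::comm_ring_1 set \<Rightarrow> 'r set \<Rightarrow> bool" where
  "ideal_of R I \<longleftrightarrow> I \<subseteq> R \<and> 0 \<in> I \<and> (\<forall>x\<in>I. \<forall>y\<in>I. x + y \<in> I) \<and> (\<forall>r\<in>R. \<forall>x\<in>I. r * x \<in> I)"

definition noetherian_ring :: "'r::comm_ring_1 set \<Rightarrow> bool" where
  "noetherian_ring R \<longleftrightarrow> (\<forall>I. ideal_of R I \<longrightarrow> fin_type_over R (*) I)"

definition lie_algebroid ::
  "('k::comm_ring_1 \<Rightarrow> 'a::comm_ring_1) \<Rightarrow> ('a \<Rightarrow> 'g::ab_group_add \<Rightarrow> 'g) \<Rightarrow> ('g \<Rightarrow> 'g \<Rightarrow> 'g)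
    \<Rightarrow> ('g \<Rightarrow> 'a \<Rightarrow> 'a) \<Rightarrow> bool" where
  "lie_algebroid iota gsc br alpha \<longleftrightarrow>
     ring_map iota \<and> module_on UNIV gsc \<and> fin_type_over UNIV gsc UNIV
     \<and> (\<forall>x y z. br (x + y) z = br x z + br y z)
     \<and> (\<forall>x y z. br x (y + z) = br x y + br x z)
     \<and> (\<forall>c x y. br (gsc (iota c) x) y = gsc (iota c) (br x y))
     \<and> (\<forall>c x y. br x (gsc (iota c) y) = gsc (iota c) (br x y))
     \<and> (\<forall>x. br x x = 0)
     \<and> (\<forall>x y z. br x (br y z) + br y (br z x) + br z (br x y) = 0)
     \<and> (\<forall>x. kder iota (alpha x))
     \<and> (\<forall>x y b. alpha (x + y) b = alpha x b + alpha y b)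
     \<and> (\<forall>a x b. alpha (gsc a x) b = a * alpha x b)
     \<and> (\<forall>x y b. alpha (br x y) b = alpha x (alpha y b) - alpha y (alpha x b))
     \<and> (\<forall>d a e. br d (gsc a e) = gsc (alpha d a) e + gsc a (br d e))"

definition g_module ::
  "('k::comm_ring_1 \<Rightarrow> 'a::comm_ring_1) \<Rightarrow> ('a \<Rightarrow> 'g::ab_group_add \<Rightarrow> 'g) \<Rightarrow> ('g \<Rightarrow> 'g \<Rightarrow> 'g)
    \<Rightarrow> ('g \<Rightarrow> 'a \<Rightarrow> 'a) \<Rightarrow> ('a \<Rightarrow> 'm::ab_group_add \<Rightarrow> 'm) \<Rightarrow> ('g \<Rightarrow> 'm \<Rightarrow> 'm) \<Rightarrow> bool" where
  "g_module iota gsc br alpha sm f \<longleftrightarrow>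
     module_on UNIV sm
     \<and> (\<forall>d m m'. f d (m + m') = f d m + f d m')
     \<and> (\<forall>c d m. f d (sm (iota c) m) = sm (iota c) (f d m))
     \<and> (\<forall>x y m. f (x + y) m = f x m + f y m)
     \<and> (\<forall>x y m. f (br x y) m = f x (f y m) - f y (f x m))
     \<and> (\<forall>a d m. f (gsc a d) m = sm a (f d m))
     \<and> (\<forall>d a m. f d (sm a m) = sm (alpha d a) m + sm a (f d m))"

definition g_submodule ::
  "('a::comm_ring_1 \<Rightarrow> 'm::ab_group_add \<Rightarrow> 'm) \<Rightarrow> ('g \<Rightarrow> 'm \<Rightarrow> 'm) \<Rightarrow> 'm set \<Rightarrow> bool" where
  "g_submodule sm f U \<longleftrightarrow> 0 \<in> U \<and> (\<forall>x\<in>U. \<forall>y\<in>U. x + y \<in> U) \<and> (\<forall>x\<in>U. - x \<in> U)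
     \<and> (\<forall>a. \<forall>x\<in>U. sm a x \<in> U) \<and> (\<forall>d. \<forall>x\<in>U. f d x \<in> U)"

definition simple_g_submodule ::
  "('a::comm_ring_1 \<Rightarrow> 'm::ab_group_add \<Rightarrow> 'm) \<Rightarrow> ('g \<Rightarrow> 'm \<Rightarrow> 'm) \<Rightarrow> 'm set \<Rightarrow> bool" where
  "simple_g_submodule sm f U \<longleftrightarrow> g_submodule sm f U \<and> U \<noteq> {0}
     \<and> (\<forall>W. g_submodule sm f W \<and> W \<subseteq> U \<longrightarrow> W = {0} \<or> W = U)"

definition g_semisimple ::
  "('a::comm_ring_1 \<Rightarrow> 'm::ab_group_add \<Rightarrow> 'm) \<Rightarrow> ('g \<Rightarrow> 'm \<Rightarrow> 'm) \<Rightarrow> bool" where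
  "g_semisimple sm f \<longleftrightarrow> (\<exists>\<M>. (\<forall>U\<in>\<M>. simple_g_submodule sm f U) \<and> dsum_decomp (\<lambda>U. U) \<M> UNIV)"

definition graded_algebra ::
  "('a::comm_ring_1 \<Rightarrow> 's::comm_ring_1) \<Rightarrow> (nat \<Rightarrow> 's set) \<Rightarrow> bool" where
  "graded_algebra sigma Sgr \<longleftrightarrow> ring_map sigma \<and> (\<forall>a. sigma a \<in> Sgr 0)
     \<and> (\<forall>i. 0 \<in> Sgr i \<and> (\<forall>x\<in>Sgr i. \<forall>y\<in>Sgr i. x + y \<in> Sgr i) \<and> (\<forall>x\<in>Sgr i. - x \<in> Sgr i)
            \<and> (\<forall>a. \<forall>x\<in>Sgr i. sigma a * x \<in> Sgr i))
     \<and> (\<forall>i j. \<forall>x\<in>Sgr i. \<forall>y\<in>Sgr j. x * y \<in> Sgr (i + j))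
     \<and> dsum_decomp Sgr UNIV UNIV"

definition graded_g_algebra ::
  "('k::comm_ring_1 \<Rightarrow> 'a::comm_ring_1) \<Rightarrow> ('a \<Rightarrow> 'g::ab_group_add \<Rightarrow> 'g) \<Rightarrow> ('g \<Rightarrow> 'g \<Rightarrow> 'g)
    \<Rightarrow> ('g \<Rightarrow> 'a \<Rightarrow> 'a) \<Rightarrow> ('a \<Rightarrow> 's::comm_ring_1) \<Rightarrow> (nat \<Rightarrow> 's set) \<Rightarrow> ('g \<Rightarrow> 's \<Rightarrow> 's) \<Rightarrow> bool" where
  "graded_g_algebra iota gsc br alpha sigma Sgr phi \<longleftrightarrow>
     graded_algebra sigma Sgr
     \<and> (\<forall>d. kder (sigma \<circ> iota) (phi d))
     \<and> g_module iota gsc br alpha (\<lambda>a s. sigma a * s) phi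
     \<and> (\<forall>d i. \<forall>s\<in>Sgr i. phi d s \<in> Sgr i)"

definition S0_g_module ::
  "('k::comm_ring_1 \<Rightarrow> 'a::comm_ring_1) \<Rightarrow> ('a \<Rightarrow> 'g::ab_group_add \<Rightarrow> 'g) \<Rightarrow> ('g \<Rightarrow> 'g \<Rightarrow> 'g)
    \<Rightarrow> ('g \<Rightarrow> 'a \<Rightarrow> 'a) \<Rightarrow> ('a \<Rightarrow> 's::comm_ring_1) \<Rightarrow> (nat \<Rightarrow> 's set) \<Rightarrow> ('g \<Rightarrow> 's \<Rightarrow> 's)
    \<Rightarrow> ('s \<Rightarrow> 'n::ab_group_add \<Rightarrow> 'n) \<Rightarrow> ('g \<Rightarrow> 'n \<Rightarrow> 'n) \<Rightarrow> bool" where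
  "S0_g_module iota gsc br alpha sigma Sgr phi nsc psi \<longleftrightarrow>
     module_on (Sgr 0) nsc
     \<and> g_module iota gsc br alpha (\<lambda>a n. nsc (sigma a) n) psi
     \<and> (\<forall>d. \<forall>s\<in>Sgr 0. \<forall>n. psi d (nsc s n) = nsc (phi d s) n + nsc s (psi d n))"

definition invariants :: "('g \<Rightarrow> 'm \<Rightarrow> 'm::zero) \<Rightarrow> 'm set \<Rightarrow> 'm set" where
  "invariants f V = {v\<in>V. \<forall>d. f d v = 0}"

end

theory Submission
  imports Defs "HOL-Library.Function_Algebras"
begin

(* Let S act on N through its degree 0 part.  Then N is a finitely generated module over the
   noetherian ring S, so its invariant submodule is spanned over S by finitely many invariant
   elements v.  An invariant w = \<Sum> c_v v is the image of the coefficient vector c under the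
   g-equivariant map S^X \<rightarrow> N, c \<mapsto> \<Sum> (c_v)_0 v.  Since S is semisimple, c can be
   replaced by an invariant vector with the same image, and the degree 0 parts of its entries
   are invariants of S^0. *)

section \<open>Spans over noetherian rings\<close>

inductive_set lin_span :: "('r \<Rightarrow> 'm::ab_group_add \<Rightarrow> 'm) \<Rightarrow> 'm set \<Rightarrow> 'm set" for sc X where
  zero: "0 \<in> lin_span sc X"
| base: "x \<in> X \<Longrightarrow> x \<in> lin_span sc X"
| add: "a \<in> lin_span sc X \<Longrightarrow> b \<in> lin_span sc X \<Longrightarrow> a + b \<in> lin_span sc X"
| smult: "a \<in> lin_span sc X \<Longrightarrow> sc r a \<in> lin_span sc X"

lemma lin_span_subset: "X \<subseteq> lin_span sc Y \<Longrightarrow> lin_span sc X \<subseteq> lin_span sc Y"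
proof
  fix x assume "X \<subseteq> lin_span sc Y" "x \<in> lin_span sc X"
  then show "x \<in> lin_span sc Y"
    by (induction rule: lin_span.induct[OF \<open>x \<in> lin_span sc X\<close>])
      (auto intro: lin_span.intros)
qed

lemma lin_span_mono: "X \<subseteq> Y \<Longrightarrow> lin_span sc X \<subseteq> lin_span sc Y"
  by (meson lin_span.base lin_span_subset subset_iff)

lemma lin_span_sum:
  "finite F \<Longrightarrow> (\<And>f. f \<in> F \<Longrightarrow> g f \<in> lin_span sc X) \<Longrightarrow> sum g F \<in> lin_span sc X"
  by (induction F rule: finite_induct) (simp_all add: lin_span.zero lin_span.add)

lemma lin_span_finite_subset:
  "x \<in> lin_span sc X \<Longrightarrow> \<exists>F\<subseteq>X. finite F \<and> x \<in> lin_span sc F"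
proof (induction rule: lin_span.induct)
  case zero
  then show ?case by (auto intro: lin_span.zero)
next
  case (base x)
  then show ?case by (intro exI[of _ "{x}"]) (simp add: lin_span.base)
next
  case (add a b)
  then obtain F1 F2 where "F1 \<subseteq> X" "finite F1" "a \<in> lin_span sc F1"
    and "F2 \<subseteq> X" "finite F2" "b \<in> lin_span sc F2" by blast
  then show ?case
    using lin_span_mono[of F1 "F1 \<union> F2" sc] lin_span_mono[of F2 "F1 \<union> F2" sc]
    by (intro exI[of _ "F1 \<union> F2"]) (auto intro: lin_span.add)
next
  case smult
  then show ?case by (meson lin_span.smult)
qed

lemma finite_subset_lin_span_finite:
  assumes "finite A" "A \<subseteq> lin_span sc X"
  shows "\<exists>X0\<subseteq>X. finite X0 \<and> A \<subseteq> lin_span sc X0"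
  using assms
proof (induction A rule: finite_induct)
  case empty
  then show ?case by blast
next
  case (insert a A)
  have "A \<subseteq> lin_span sc X" "a \<in> lin_span sc X"
    using insert.prems by simp_all
  obtain X0 where X0: "X0 \<subseteq> X" "finite X0" "A \<subseteq> lin_span sc X0"
    using insert.IH[OF \<open>A \<subseteq> lin_span sc X\<close>] by blast
  obtain E where E: "E \<subseteq> X" "finite E" "a \<in> lin_span sc E"
    using lin_span_finite_subset[OF \<open>a \<in> lin_span sc X\<close>] by blast
  have "insert a A \<subseteq> lin_span sc (X0 \<union> E)"
    using X0(3) E(3) lin_span_mono[of X0 "X0 \<union> E" sc] lin_span_mono[of E "X0 \<union> E" sc]
    by blast
  moreover have "X0 \<union> E \<subseteq> X" "finite (X0 \<union> E)"
    using X0 E by simp_all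
  ultimately show ?case by blast
qed

lemma noetherian_ideal_generators:
  assumes "noetherian_ring (UNIV :: 'r::comm_ring_1 set)" "ideal_of (UNIV :: 'r set) I"
  obtains G where "finite G" "G \<subseteq> I" "\<And>r. r \<in> I \<Longrightarrow> \<exists>a. r = (\<Sum>g\<in>G. a g * g)"
proof -
  have "fin_type_over UNIV (*) I"
    using assms unfolding noetherian_ring_def by blast
  then obtain G where G: "finite G" "G \<subseteq> I"
    and I_eq: "I = {(\<Sum>g\<in>G. a g * g) | a. \<forall>g\<in>G. a g \<in> UNIV}"
    unfolding fin_type_over_def by (elim exE conjE) simp
  show ?thesis
  proof (rule that[OF G])
    fix r assume "r \<in> I"
    then show "\<exists>a. r = (\<Sum>g\<in>G. a g * g)"
      using I_eq by blast
  qed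
qed

locale ring_module =
  fixes sc :: "'r::comm_ring_1 \<Rightarrow> 'm::ab_group_add \<Rightarrow> 'm"
  assumes module: "module_on UNIV sc"
begin

lemma smult_assoc: "sc (r * s) x = sc r (sc s x)"
  and smult_one: "sc 1 x = x"
  and smult_add_left: "sc (r + s) x = sc r x + sc s x"
  and smult_add_right: "sc r (x + y) = sc r x + sc r y"
  using module unfolding module_on_def by blast+

lemma smult_zero_left: "sc 0 x = 0"
  using smult_add_left[of 0 0 x] by simp

lemma smult_zero_right: "sc r 0 = 0"
  using smult_add_right[of r 0 0] by simp

lemma smult_minus_left: "sc (- r) x = - sc r x"
  using smult_add_left[of r "- r" x] by (metis smult_zero_left neg_eq_iff_add_eq_0 add.right_inverse)

lemma smult_sum_left: "finite F \<Longrightarrow> sc (sum g F) x = (\<Sum>i\<in>F. sc (g i) x)"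
  by (induction F rule: finite_induct) (auto simp: smult_zero_left smult_add_left)

lemma smult_sum_right: "finite F \<Longrightarrow> sc r (sum g F) = (\<Sum>i\<in>F. sc r (g i))"
  by (induction F rule: finite_induct) (auto simp: smult_zero_right smult_add_right)

lemma lin_span_diff: "a \<in> lin_span sc X \<Longrightarrow> b \<in> lin_span sc X \<Longrightarrow> a - b \<in> lin_span sc X"
  using lin_span.add[OF _ lin_span.smult, of a sc X b "- 1"]
  by (simp add: smult_minus_left smult_one)

lemma lin_span_empty: "lin_span sc {} = {0}"
proof -
  have "x = 0" if "x \<in> lin_span sc {}" for x
    using that by (induction rule: lin_span.induct) (simp_all add: smult_zero_right)
  then show ?thesis using lin_span.zero by blast
qed

lemma lin_span_insert:
  "x \<in> lin_span sc (insert f F) \<Longrightarrow> \<exists>r y. y \<in> lin_span sc F \<and> x = sc r f + y"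
proof (induction rule: lin_span.induct)
  case zero
  then show ?case by (intro exI[of _ 0]) (simp add: smult_zero_left lin_span.zero)
next
  case (base x)
  then show ?case
  proof
    assume "x = f"
    then show ?thesis by (intro exI[of _ 1] exI[of _ 0]) (simp add: smult_one lin_span.zero)
  next
    assume "x \<in> F"
    then show ?thesis by (intro exI[of _ 0] exI[of _ x]) (simp add: smult_zero_left lin_span.base)
  qed
next
  case (add a b)
  then obtain r y r' y' where "y \<in> lin_span sc F" "a = sc r f + y"
    and "y' \<in> lin_span sc F" "b = sc r' f + y'" by blast
  then show ?case
    by (intro exI[of _ "r + r'"] exI[of _ "y + y'"])
      (simp add: smult_add_left algebra_simps lin_span.add)
next
  case (smult a s)
  then obtain r y where "y \<in> lin_span sc F" "a = sc r f + y" by blast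
  then show ?case
    by (intro exI[of _ "s * r"] exI[of _ "sc s y"])
      (simp add: smult_add_right smult_assoc lin_span.smult)
qed

lemma lin_span_finite_eq: "finite F \<Longrightarrow> lin_span sc F = {(\<Sum>f\<in>F. sc (r f) f) | r. True}"
proof
  assume fin: "finite F"
  show "lin_span sc F \<subseteq> {(\<Sum>f\<in>F. sc (r f) f) | r. True}"
  proof
    fix x assume "x \<in> lin_span sc F"
    then show "x \<in> {(\<Sum>f\<in>F. sc (r f) f) | r. True}"
    proof (induction rule: lin_span.induct)
      case zero
      then show ?case by (intro CollectI exI[of _ "\<lambda>_. 0"]) (simp add: smult_zero_left)
    next
      case (base x)
      have "(\<Sum>f\<in>F. sc (if f = x then 1 else 0) f) = (\<Sum>f\<in>F. if f = x then x else 0)"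
        by (rule sum.cong) (auto simp: smult_one smult_zero_left)
      also have "\<dots> = x" using fin base by simp
      finally show ?case by (intro CollectI exI[of _ "\<lambda>f. if f = x then 1 else 0"]) simp
    next
      case (add a b)
      then obtain r r' where "a = (\<Sum>f\<in>F. sc (r f) f)" "b = (\<Sum>f\<in>F. sc (r' f) f)" by blast
      then show ?case
        by (intro CollectI exI[of _ "\<lambda>f. r f + r' f"]) (simp add: smult_add_left sum.distrib)
    next
      case (smult a s)
      then obtain r where "a = (\<Sum>f\<in>F. sc (r f) f)" by blast
      then show ?case
        by (intro CollectI exI[of _ "\<lambda>f. s * r f"]) (simp add: smult_sum_right fin smult_assoc)
    qed
  qed
  show "{(\<Sum>f\<in>F. sc (r f) f) | r. True} \<subseteq> lin_span sc F"
  proof safe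
    fix r
    show "(\<Sum>f\<in>F. sc (r f) f) \<in> lin_span sc F"
      using fin by (intro lin_span_sum lin_span.smult lin_span.base)
  qed
qed

lemma ideal_of_coefficients:
  "ideal_of UNIV {r. \<exists>y\<in>lin_span sc F. sc r f + y \<in> lin_span sc X}"
  (is "ideal_of UNIV ?I")
  unfolding ideal_of_def
proof (intro conjI ballI)
  show "0 \<in> ?I"
    by (intro CollectI bexI[of _ 0]) (simp_all add: smult_zero_left lin_span.zero)
next
  fix r s assume "r \<in> ?I" "s \<in> ?I"
  then obtain u v where u: "u \<in> lin_span sc F" "sc r f + u \<in> lin_span sc X"
    and v: "v \<in> lin_span sc F" "sc s f + v \<in> lin_span sc X" by blast
  have "sc (r + s) f + (u + v) = (sc r f + u) + (sc s f + v)"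
    by (simp add: smult_add_left algebra_simps)
  also have "\<dots> \<in> lin_span sc X"
    using u(2) v(2) by (rule lin_span.add)
  finally have "sc (r + s) f + (u + v) \<in> lin_span sc X" .
  moreover have "u + v \<in> lin_span sc F"
    using u(1) v(1) by (rule lin_span.add)
  ultimately show "r + s \<in> ?I" by blast
next
  fix t r assume "r \<in> ?I"
  then obtain u where u: "u \<in> lin_span sc F" "sc r f + u \<in> lin_span sc X" by blast
  have "sc (t * r) f + sc t u = sc t (sc r f + u)"
    by (simp add: smult_assoc smult_add_right)
  also have "\<dots> \<in> lin_span sc X"
    using u(2) by (rule lin_span.smult)
  finally have "sc (t * r) f + sc t u \<in> lin_span sc X" .
  moreover have "sc t u \<in> lin_span sc F"
    using u(1) by (rule lin_span.smult)
  ultimately show "t * r \<in> ?I" by blast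
qed simp

lemma lin_span_cancel_coefficient:
  assumes "finite G" "\<And>g. g \<in> G \<Longrightarrow> y g \<in> lin_span sc F" "z \<in> lin_span sc F"
  shows "sc (\<Sum>g\<in>G. a g * g) f + z - (\<Sum>g\<in>G. sc (a g) (sc g f + y g)) \<in> lin_span sc F"
proof -
  have "sc (\<Sum>g\<in>G. a g * g) f + z - (\<Sum>g\<in>G. sc (a g) (sc g f + y g))
      = z - (\<Sum>g\<in>G. sc (a g) (y g))"
    by (simp add: smult_add_right smult_assoc sum.distrib smult_sum_left[OF assms(1)])
  also have "\<dots> \<in> lin_span sc F"
    using assms by (intro lin_span_diff lin_span_sum lin_span.smult) auto
  finally show ?thesis .
qed

text \<open>Hilbert's argument: the coefficients of the new generator f occurring in the span of X
  form an ideal, finitely generated by noetherianity; the rest of X lies in the span of F and is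
  handled by induction.\<close>

lemma noetherian_lin_span_insert:
  assumes noeth: "noetherian_ring (UNIV :: 'r set)"
    and IH: "\<And>Z. Z \<subseteq> lin_span sc F \<Longrightarrow> \<exists>Z0\<subseteq>Z. finite Z0 \<and> Z \<subseteq> lin_span sc Z0"
    and X: "X \<subseteq> lin_span sc (insert f F)"
  obtains A where "finite A" "A \<subseteq> lin_span sc X" "X \<subseteq> lin_span sc A"
proof -
  define Y where "Y = lin_span sc X"
  define I where "I = {r. \<exists>y\<in>lin_span sc F. sc r f + y \<in> Y}"
  have "ideal_of UNIV I"
    unfolding I_def Y_def by (rule ideal_of_coefficients)
  obtain G where G: "finite G" "G \<subseteq> I" and gen: "\<And>r. r \<in> I \<Longrightarrow> \<exists>a. r = (\<Sum>g\<in>G. a g * g)"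
    using noetherian_ideal_generators[OF noeth \<open>ideal_of UNIV I\<close>] by metis
  have "\<forall>g\<in>G. \<exists>y\<in>lin_span sc F. sc g f + y \<in> Y"
    using G(2) unfolding I_def by blast
  then obtain y where y: "\<And>g. g \<in> G \<Longrightarrow> y g \<in> lin_span sc F \<and> sc g f + y g \<in> Y"
    by (metis bchoice)
  have "Y \<inter> lin_span sc F \<subseteq> lin_span sc F"
    by simp
  obtain Z0 where Z0: "Z0 \<subseteq> Y \<inter> lin_span sc F" "finite Z0" "Y \<inter> lin_span sc F \<subseteq> lin_span sc Z0"
    using IH[OF \<open>Y \<inter> lin_span sc F \<subseteq> lin_span sc F\<close>] by metis
  let ?A = "(\<lambda>g. sc g f + y g) ` G \<union> Z0"
  have "x \<in> lin_span sc ?A" if x: "x \<in> X" for x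
  proof -
    obtain r z where z: "z \<in> lin_span sc F" and xrz: "x = sc r f + z"
      using X x lin_span_insert by blast
    have xY: "x \<in> Y"
      unfolding Y_def using x by (rule lin_span.base)
    then have "r \<in> I"
      unfolding I_def using z xrz by auto
    then obtain a where a: "r = (\<Sum>g\<in>G. a g * g)"
      using gen by blast
    define s where "s = (\<Sum>g\<in>G. sc (a g) (sc g f + y g))"
    have s_A: "s \<in> lin_span sc ?A"
      unfolding s_def using G(1) by (intro lin_span_sum lin_span.smult lin_span.base) auto
    have s_Y: "s \<in> Y"
      unfolding s_def Y_def using G(1) y[unfolded Y_def] by (intro lin_span_sum lin_span.smult) auto
    have "x - s \<in> lin_span sc F"
      using lin_span_cancel_coefficient[OF G(1), of y F z a f] y z unfolding xrz a s_def by blast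
    moreover have "x - s \<in> Y"
      using xY s_Y unfolding Y_def by (rule lin_span_diff)
    ultimately have "x - s \<in> lin_span sc Z0"
      using Z0(3) by blast
    moreover have "lin_span sc Z0 \<subseteq> lin_span sc ?A"
      by (rule lin_span_mono) blast
    ultimately have "x - s \<in> lin_span sc ?A"
      by blast
    from lin_span.add[OF this s_A] show ?thesis
      by simp
  qed
  then have "X \<subseteq> lin_span sc ?A"
    by blast
  moreover have "finite ?A" "?A \<subseteq> lin_span sc X"
    using G(1) Z0(1,2) y unfolding Y_def by auto
  ultimately show ?thesis
    using that by blast
qed

lemma noetherian_lin_span_finitely_generated:
  assumes noeth: "noetherian_ring (UNIV :: 'r set)" and "finite F"
  shows "X \<subseteq> lin_span sc F \<Longrightarrow> \<exists>X0\<subseteq>X. finite X0 \<and> X \<subseteq> lin_span sc X0"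
  using \<open>finite F\<close>
proof (induction F arbitrary: X rule: finite_induct)
  case empty
  then have "X \<subseteq> {0}"
    using lin_span_empty by simp
  then have "finite X"
    using finite_subset by blast
  then show ?case
    by (intro exI[of _ X]) (auto intro: lin_span.base)
next
  case (insert f F)
  obtain A where A: "finite A" "A \<subseteq> lin_span sc X" "X \<subseteq> lin_span sc A"
    using noetherian_lin_span_insert[OF noeth insert.IH insert.prems] by blast
  obtain X0 where X0: "X0 \<subseteq> X" "finite X0" "A \<subseteq> lin_span sc X0"
    using finite_subset_lin_span_finite[OF A(1,2)] by metis
  have "X \<subseteq> lin_span sc X0"
    using A(3) lin_span_subset[OF X0(3)] by (rule order.trans)
  with X0(1,2) show ?case
    by (intro exI[of _ X0]) simp
qed

end

section \<open>The degree 0 part in a graded ring\<close>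

definition hom_components :: "(nat \<Rightarrow> 's::comm_ring_1 set) \<Rightarrow> 's \<Rightarrow> (nat \<Rightarrow> 's) \<Rightarrow> bool" where
  "hom_components Sgr x h \<longleftrightarrow>
     (\<forall>i. h i \<in> Sgr i) \<and> finite {i. h i \<noteq> 0} \<and> x = sum h {i. h i \<noteq> 0}"

definition deg0_part :: "(nat \<Rightarrow> 's::comm_ring_1 set) \<Rightarrow> 's \<Rightarrow> 's" where
  "deg0_part Sgr x = (SOME h. hom_components Sgr x h) 0"

locale graded_ring =
  fixes sigma :: "'a::comm_ring_1 \<Rightarrow> 's::comm_ring_1" and Sgr :: "nat \<Rightarrow> 's set"
  assumes graded: "graded_algebra sigma Sgr"
begin

lemma zero_graded: "0 \<in> Sgr i"
  and add_graded: "x \<in> Sgr i \<Longrightarrow> y \<in> Sgr i \<Longrightarrow> x + y \<in> Sgr i"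
  and minus_graded: "x \<in> Sgr i \<Longrightarrow> - x \<in> Sgr i"
  and mult_graded: "x \<in> Sgr i \<Longrightarrow> y \<in> Sgr j \<Longrightarrow> x * y \<in> Sgr (i + j)"
  and sigma_deg0: "sigma a \<in> Sgr 0"
  and ring_map_sigma: "ring_map sigma"
  and graded_decomp: "dsum_decomp Sgr UNIV UNIV"
  using graded unfolding graded_algebra_def by blast+

lemma diff_graded: "x \<in> Sgr i \<Longrightarrow> y \<in> Sgr i \<Longrightarrow> x - y \<in> Sgr i"
  by (metis add_graded minus_graded diff_conv_add_uminus)

lemma one_deg0: "1 \<in> Sgr 0"
  using sigma_deg0[of 1] ring_map_sigma unfolding ring_map_def by simp

lemma sum_graded: "finite P \<Longrightarrow> (\<And>p. p \<in> P \<Longrightarrow> y p \<in> Sgr i) \<Longrightarrow> sum y P \<in> Sgr i"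
  by (induction P rule: finite_induct) (simp_all add: zero_graded add_graded)

lemma homogeneous_sum_eq_0:
  assumes "finite F" "\<forall>i\<in>F. x i \<in> Sgr i" "sum x F = 0" "i \<in> F"
  shows "x i = 0"
  using graded_decomp assms unfolding dsum_decomp_def by (metis UNIV_I subsetI)

lemma hom_componentsI:
  assumes "finite S" "\<And>i. h i \<in> Sgr i" "\<And>i. i \<notin> S \<Longrightarrow> h i = 0" "x = sum h S"
  shows "hom_components Sgr x h"
proof -
  have sub: "{i. h i \<noteq> 0} \<subseteq> S"
    using assms(3) by blast
  then have "sum h S = sum h {i. h i \<noteq> 0}"
    by (intro sum.mono_neutral_right[OF assms(1)]) auto
  then show ?thesis
    unfolding hom_components_def using assms(1,2,4) finite_subset[OF sub] by simp
qed

lemma hom_components_unique: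
  assumes "hom_components Sgr x h" "hom_components Sgr x k"
  shows "h = k"
proof
  fix i
  define S where "S = {i. h i \<noteq> 0} \<union> {i. k i \<noteq> 0}"
  have fin: "finite S"
    using assms unfolding hom_components_def S_def by blast
  have "sum h S = sum h {i. h i \<noteq> 0}" "sum k S = sum k {i. k i \<noteq> 0}"
    by (rule sum.mono_neutral_right[OF fin]; auto simp: S_def)+
  then have "(\<Sum>i\<in>S. h i - k i) = 0"
    using assms unfolding hom_components_def by (simp add: sum_subtractf)
  moreover have "\<forall>i\<in>S. h i - k i \<in> Sgr i"
    using assms unfolding hom_components_def by (simp add: diff_graded)
  ultimately have "h i - k i = 0" if "i \<in> S"
    using homogeneous_sum_eq_0[OF fin, of "\<lambda>i. h i - k i"] that by blast
  then show "h i = k i"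
    by (cases "i \<in> S") (auto simp: S_def)
qed

lemma hom_components_exists: "\<exists>h. hom_components Sgr x h"
proof -
  obtain F xf where F: "finite F" "\<forall>i\<in>F. xf i \<in> Sgr i" "x = sum xf F"
    using graded_decomp unfolding dsum_decomp_def by (metis UNIV_I)
  define h where "h i = (if i \<in> F then xf i else 0)" for i
  have "x = sum h F"
    unfolding h_def F(3) by (rule sum.cong) auto
  then have "hom_components Sgr x h"
    using F by (intro hom_componentsI[OF F(1)]) (auto simp: h_def zero_graded)
  then show ?thesis by blast
qed

lemma deg0_part_eq:
  assumes "finite S" "\<And>i. h i \<in> Sgr i" "\<And>i. i \<notin> S \<Longrightarrow> h i = 0" "x = sum h S"
  shows "deg0_part Sgr x = h 0"
proof -
  have "hom_components Sgr x h"
    using hom_componentsI[OF assms] .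
  moreover have "hom_components Sgr x (SOME h. hom_components Sgr x h)"
    using hom_components_exists by (rule someI_ex)
  ultimately show ?thesis
    unfolding deg0_part_def using hom_components_unique by metis
qed

lemma homogeneous_decomposition:
  obtains S h where "finite S" "0 \<in> S" "\<And>i. h i \<in> Sgr i" "\<And>i. i \<notin> S \<Longrightarrow> h i = 0" "x = sum h S"
proof -
  obtain h where h: "hom_components Sgr x h"
    using hom_components_exists by blast
  define S where "S = insert 0 {i. h i \<noteq> 0}"
  have fin: "finite S"
    using h unfolding hom_components_def S_def by simp
  have "x = sum h S"
    using h unfolding hom_components_def S_def by (cases "h 0 = 0") (auto simp: insert_absorb)
  moreover have "0 \<in> S" "\<And>i. i \<notin> S \<Longrightarrow> h i = 0"
    by (auto simp: S_def)
  moreover have "\<And>i. h i \<in> Sgr i"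
    using h unfolding hom_components_def by blast
  ultimately show ?thesis
    using fin that by blast
qed

lemma deg0_part_sum_homogeneous:
  assumes "finite P" "\<And>p. p \<in> P \<Longrightarrow> y p \<in> Sgr (deg p)" "x = sum y P"
  shows "deg0_part Sgr x = sum y {p\<in>P. deg p = 0}"
proof -
  define h where "h i = sum y {p\<in>P. deg p = i}" for i
  have "x = sum h (deg ` P)"
    unfolding h_def assms(3) using assms(1) by (rule sum.image_gen)
  moreover have "h i \<in> Sgr i" for i
    unfolding h_def using assms(1,2) by (intro sum_graded) auto
  moreover have "h i = 0" if "i \<notin> deg ` P" for i
    unfolding h_def using that by (intro sum.neutral) auto
  ultimately show ?thesis
    unfolding h_def[symmetric] using assms(1) by (intro deg0_part_eq[of "deg ` P"]) auto
qed

lemma deg0_part_deg0: "deg0_part Sgr x \<in> Sgr 0"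
proof -
  obtain S h where "finite S" "\<And>i. h i \<in> Sgr i" "\<And>i. i \<notin> S \<Longrightarrow> h i = 0" "x = sum h S"
    using homogeneous_decomposition by metis
  then show ?thesis
    using deg0_part_eq[of S h x] by auto
qed

lemma deg0_part_id: "x \<in> Sgr 0 \<Longrightarrow> deg0_part Sgr x = x"
  using deg0_part_eq[of "{0}" "\<lambda>i. if i = 0 then x else 0" x] by (auto simp: zero_graded)

lemma deg0_part_zero: "deg0_part Sgr 0 = 0"
  by (simp add: deg0_part_id zero_graded)

lemma deg0_part_one: "deg0_part Sgr 1 = 1"
  by (simp add: deg0_part_id one_deg0)

lemma deg0_part_add: "deg0_part Sgr (x + y) = deg0_part Sgr x + deg0_part Sgr y"
proof -
  obtain S h where h: "finite S" "\<And>i. h i \<in> Sgr i" "\<And>i. i \<notin> S \<Longrightarrow> h i = 0" "x = sum h S"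
    using homogeneous_decomposition by metis
  obtain T k where k: "finite T" "\<And>i. k i \<in> Sgr i" "\<And>i. i \<notin> T \<Longrightarrow> k i = 0" "y = sum k T"
    using homogeneous_decomposition by metis
  have "sum h S = sum h (S \<union> T)" "sum k T = sum k (S \<union> T)"
    using h k by (auto intro: sum.mono_neutral_left)
  then have "x + y = (\<Sum>i\<in>S \<union> T. h i + k i)"
    using h k by (simp add: sum.distrib)
  then have "deg0_part Sgr (x + y) = h 0 + k 0"
    using h k by (intro deg0_part_eq[of "S \<union> T"]) (auto simp: add_graded)
  moreover have "deg0_part Sgr x = h 0" "deg0_part Sgr y = k 0"
    using h k by (auto intro: deg0_part_eq)
  ultimately show ?thesis by simp
qed

lemma deg0_part_mult: "deg0_part Sgr (x * y) = deg0_part Sgr x * deg0_part Sgr y"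
proof -
  obtain S h where h: "finite S" "0 \<in> S" "\<And>i. h i \<in> Sgr i" "\<And>i. i \<notin> S \<Longrightarrow> h i = 0" "x = sum h S"
    using homogeneous_decomposition by metis
  obtain T k where k: "finite T" "0 \<in> T" "\<And>i. k i \<in> Sgr i" "\<And>i. i \<notin> T \<Longrightarrow> k i = 0" "y = sum k T"
    using homogeneous_decomposition by metis
  have "x * y = (\<Sum>i\<in>S. \<Sum>j\<in>T. h i * k j)"
    using h(5) k(5) by (simp only: sum_product)
  also have "\<dots> = (\<Sum>p\<in>S \<times> T. h (fst p) * k (snd p))"
    by (simp add: sum.cartesian_product case_prod_beta)
  finally have "deg0_part Sgr (x * y) = (\<Sum>p\<in>{p\<in>S \<times> T. fst p + snd p = 0}. h (fst p) * k (snd p))"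
    using h(1,3) k(1,3) by (intro deg0_part_sum_homogeneous) (auto simp: mult_graded)
  also have "{p\<in>S \<times> T. fst p + snd p = 0} = {(0, 0)}"
    using h(2) k(2) by auto
  finally show ?thesis
    using h k deg0_part_eq[of S h x] deg0_part_eq[of T k y] by simp
qed

lemma deg0_part_commute:
  assumes add: "\<And>m m'. D (m + m') = D m + D m'" and graded: "\<And>i s. s \<in> Sgr i \<Longrightarrow> D s \<in> Sgr i"
  shows "deg0_part Sgr (D x) = D (deg0_part Sgr x)"
proof -
  have D0: "D 0 = 0"
    using add[of 0 0] by simp
  have D_sum: "D (sum g F) = (\<Sum>i\<in>F. D (g i))" if "finite F" for F and g :: "nat \<Rightarrow> 's"
    using that by (induction F rule: finite_induct) (simp_all add: D0 add)
  obtain S h where h: "finite S" "\<And>i. h i \<in> Sgr i" "\<And>i. i \<notin> S \<Longrightarrow> h i = 0" "x = sum h S"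
    using homogeneous_decomposition by metis
  have "deg0_part Sgr (D x) = D (h 0)"
    using h by (intro deg0_part_eq[of S "\<lambda>i. D (h i)"]) (auto simp: D_sum D0 graded)
  moreover have "deg0_part Sgr x = h 0"
    using h by (intro deg0_part_eq[of S]) auto
  ultimately show ?thesis by simp
qed

end

section \<open>Lifting invariants along equivariant maps\<close>

lemma g_submoduleD:
  assumes "g_submodule sm f U"
  shows g_submodule_zero: "0 \<in> U"
    and g_submodule_add: "x \<in> U \<Longrightarrow> y \<in> U \<Longrightarrow> x + y \<in> U"
    and g_submodule_minus: "x \<in> U \<Longrightarrow> - x \<in> U"
    and g_submodule_smult: "x \<in> U \<Longrightarrow> sm a x \<in> U"
    and g_submodule_act: "x \<in> U \<Longrightarrow> f d x \<in> U"
  using assms unfolding g_submodule_def by blast+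

definition family_sum :: "'i set \<Rightarrow> ('i \<Rightarrow> 'm::ab_group_add set) \<Rightarrow> 'm set" where
  "family_sum I U = {(\<Sum>i\<in>I. x i) | x. \<forall>i\<in>I. x i \<in> U i}"

lemma family_sum_empty: "family_sum {} U = {0}"
  unfolding family_sum_def by simp

lemma family_sum_insert:
  assumes "finite I" "i \<notin> I" "z \<in> family_sum (insert i I) U"
  obtains u s where "u \<in> U i" "s \<in> family_sum I U" "z = u + s"
proof -
  obtain x where x: "\<forall>j\<in>insert i I. x j \<in> U j" "z = (\<Sum>j\<in>insert i I. x j)"
    using assms(3) unfolding family_sum_def by blast
  have "z = x i + (\<Sum>j\<in>I. x j)"
    using x(2) assms(1,2) by simp
  moreover have "(\<Sum>j\<in>I. x j) \<in> family_sum I U"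
    unfolding family_sum_def using x(1) by blast
  ultimately show ?thesis
    using x(1) that by blast
qed

locale equivariant_map =
  fixes smM :: "'a::comm_ring_1 \<Rightarrow> 'm::ab_group_add \<Rightarrow> 'm" and fM :: "'g \<Rightarrow> 'm \<Rightarrow> 'm"
    and smW :: "'a \<Rightarrow> 'w::ab_group_add \<Rightarrow> 'w" and fW :: "'g \<Rightarrow> 'w \<Rightarrow> 'w"
    and ph :: "'m \<Rightarrow> 'w"
  assumes ph_add: "ph (x + y) = ph x + ph y"
    and ph_smult: "ph (smM a x) = smW a (ph x)"
    and ph_act: "ph (fM d x) = fW d (ph x)"
    and smM_add: "smM a (x + y) = smM a x + smM a y"
    and fM_add: "fM d (x + y) = fM d x + fM d y"
begin

lemma ph_zero: "ph 0 = 0"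
  using ph_add[of 0 0] by simp

lemma ph_minus: "ph (- x) = - ph x"
  using ph_add[of x "- x"] by (metis ph_zero add.right_inverse neg_eq_iff_add_eq_0)

lemma g_submodule_singleton_zero: "g_submodule smM fM {0}"
  using smM_add[of _ 0 0] fM_add[of _ 0 0] unfolding g_submodule_def by simp

lemma g_submodule_plus:
  assumes V: "g_submodule smM fM V" and U: "g_submodule smM fM U"
  shows "g_submodule smM fM {v + u | v u. v \<in> V \<and> u \<in> U}"
  unfolding g_submodule_def
proof (intro conjI ballI allI)
  show "0 \<in> {v + u | v u. v \<in> V \<and> u \<in> U}"
    using g_submodule_zero[OF V] g_submodule_zero[OF U] by force
next
  fix x y assume "x \<in> {v + u | v u. v \<in> V \<and> u \<in> U}" "y \<in> {v + u | v u. v \<in> V \<and> u \<in> U}"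
  then obtain v u v' u' where "x = v + u" "y = v' + u'" "v \<in> V" "u \<in> U" "v' \<in> V" "u' \<in> U"
    by blast
  then show "x + y \<in> {v + u | v u. v \<in> V \<and> u \<in> U}"
    using g_submodule_add[OF V] g_submodule_add[OF U]
    by (intro CollectI exI[of _ "v + v'"] exI[of _ "u + u'"]) (simp add: algebra_simps)
next
  fix x assume "x \<in> {v + u | v u. v \<in> V \<and> u \<in> U}"
  then obtain v u where "x = v + u" "v \<in> V" "u \<in> U"
    by blast
  then show "- x \<in> {v + u | v u. v \<in> V \<and> u \<in> U}"
    using g_submodule_minus[OF V] g_submodule_minus[OF U]
    by (intro CollectI exI[of _ "- v"] exI[of _ "- u"]) simp
next
  fix a x assume "x \<in> {v + u | v u. v \<in> V \<and> u \<in> U}"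
  then obtain v u where "x = v + u" "v \<in> V" "u \<in> U"
    by blast
  then show "smM a x \<in> {v + u | v u. v \<in> V \<and> u \<in> U}"
    using g_submodule_smult[OF V] g_submodule_smult[OF U]
    by (intro CollectI exI[of _ "smM a v"] exI[of _ "smM a u"]) (simp add: smM_add)
next
  fix d x assume "x \<in> {v + u | v u. v \<in> V \<and> u \<in> U}"
  then obtain v u where "x = v + u" "v \<in> V" "u \<in> U"
    by blast
  then show "fM d x \<in> {v + u | v u. v \<in> V \<and> u \<in> U}"
    using g_submodule_act[OF V] g_submodule_act[OF U]
    by (intro CollectI exI[of _ "fM d v"] exI[of _ "fM d u"]) (simp add: fM_add)
qed

lemma g_submodule_same_image:
  assumes U: "g_submodule smM fM U" and V: "g_submodule smM fM V"
  shows "g_submodule smM fM {u \<in> U. \<exists>v\<in>V. ph u = ph v}"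
  unfolding g_submodule_def
proof (intro conjI ballI allI)
  show "0 \<in> {u \<in> U. \<exists>v\<in>V. ph u = ph v}"
    using g_submodule_zero[OF U] g_submodule_zero[OF V] by blast
next
  fix x y assume "x \<in> {u \<in> U. \<exists>v\<in>V. ph u = ph v}" "y \<in> {u \<in> U. \<exists>v\<in>V. ph u = ph v}"
  then obtain v v' where "x \<in> U" "y \<in> U" "v \<in> V" "v' \<in> V" "ph x = ph v" "ph y = ph v'"
    by blast
  then show "x + y \<in> {u \<in> U. \<exists>v\<in>V. ph u = ph v}"
    using g_submodule_add[OF U] g_submodule_add[OF V]
    by (intro CollectI conjI bexI[of _ "v + v'"]) (simp_all add: ph_add)
next
  fix x assume "x \<in> {u \<in> U. \<exists>v\<in>V. ph u = ph v}"
  then obtain v where "x \<in> U" "v \<in> V" "ph x = ph v"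
    by blast
  then show "- x \<in> {u \<in> U. \<exists>v\<in>V. ph u = ph v}"
    using g_submodule_minus[OF U] g_submodule_minus[OF V]
    by (intro CollectI conjI bexI[of _ "- v"]) (simp_all add: ph_minus)
next
  fix a x assume "x \<in> {u \<in> U. \<exists>v\<in>V. ph u = ph v}"
  then obtain v where "x \<in> U" "v \<in> V" "ph x = ph v"
    by blast
  then show "smM a x \<in> {u \<in> U. \<exists>v\<in>V. ph u = ph v}"
    using g_submodule_smult[OF U] g_submodule_smult[OF V]
    by (intro CollectI conjI bexI[of _ "smM a v"]) (simp_all add: ph_smult)
next
  fix d x assume "x \<in> {u \<in> U. \<exists>v\<in>V. ph u = ph v}"
  then obtain v where "x \<in> U" "v \<in> V" "ph x = ph v"
    by blast
  then show "fM d x \<in> {u \<in> U. \<exists>v\<in>V. ph u = ph v}"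
    using g_submodule_act[OF U] g_submodule_act[OF V]
    by (intro CollectI conjI bexI[of _ "fM d v"]) (simp_all add: ph_act)
qed

lemma image_family_sum_insert:
  assumes "finite I" "i \<notin> I" "ph ` family_sum I U \<subseteq> ph ` V"
  shows "ph ` family_sum (insert i I) U \<subseteq> ph ` {v + u | v u. v \<in> V \<and> u \<in> U i}"
proof
  fix w assume "w \<in> ph ` family_sum (insert i I) U"
  then obtain z where z: "z \<in> family_sum (insert i I) U" "w = ph z"
    by blast
  obtain u s where u: "u \<in> U i" and s: "s \<in> family_sum I U" and "z = u + s"
    using family_sum_insert[OF assms(1,2) z(1)] by blast
  obtain v where "v \<in> V" "ph s = ph v"
    using assms(3) s by blast
  then have "w = ph (v + u)" "v + u \<in> {v + u | v u. v \<in> V \<and> u \<in> U i}"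
    using z(2) \<open>z = u + s\<close> u by (auto simp: ph_add)
  then show "w \<in> ph ` {v + u | v u. v \<in> V \<and> u \<in> U i}"
    by blast
qed

text \<open>If adding a simple submodule U to V creates a kernel, the elements of U with the same
  image as some element of V form a nonzero submodule of U, hence all of U.\<close>

lemma image_plus_simple_subset:
  assumes V: "g_submodule smM fM V" and inj: "\<forall>x\<in>V. ph x = 0 \<longrightarrow> x = 0"
    and U: "simple_g_submodule smM fM U"
    and not_inj: "\<not> (\<forall>x\<in>{v + u | v u. v \<in> V \<and> u \<in> U}. ph x = 0 \<longrightarrow> x = 0)"
  shows "ph ` {v + u | v u. v \<in> V \<and> u \<in> U} \<subseteq> ph ` V"
proof -
  have U_sub: "g_submodule smM fM U"
    using U unfolding simple_g_submodule_def by blast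
  obtain v u where vu: "v \<in> V" "u \<in> U" "ph (v + u) = 0" "v + u \<noteq> 0"
    using not_inj by blast
  define T where "T = {u \<in> U. \<exists>v\<in>V. ph u = ph v}"
  have "u \<noteq> 0"
    using vu inj by auto
  moreover have "u \<in> T"
    unfolding T_def using vu g_submodule_minus[OF V, of v]
    by (intro CollectI conjI bexI[of _ "- v"]) (auto simp: ph_add ph_minus eq_neg_iff_add_eq_0 add.commute)
  moreover have "g_submodule smM fM T" "T \<subseteq> U"
    unfolding T_def using g_submodule_same_image[OF U_sub V] by auto
  ultimately have "T = U"
    using U unfolding simple_g_submodule_def by blast
  show ?thesis
  proof
    fix w assume "w \<in> ph ` {v + u | v u. v \<in> V \<and> u \<in> U}"
    then obtain v u where "v \<in> V" "u \<in> U" "w = ph (v + u)"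
      by blast
    moreover obtain v' where "v' \<in> V" "ph u = ph v'"
      using \<open>u \<in> U\<close> \<open>T = U\<close> unfolding T_def by blast
    ultimately have "w = ph (v + v')" "v + v' \<in> V"
      using g_submodule_add[OF V] by (simp_all add: ph_add)
    then show "w \<in> ph ` V"
      by blast
  qed
qed

text \<open>Add the simple summands one at a time, dropping a summand whenever adding it would
  create a kernel.\<close>

lemma injective_submodule_with_same_image:
  assumes "finite I" "\<forall>i\<in>I. simple_g_submodule smM fM (U i)"
  shows "\<exists>V. g_submodule smM fM V \<and> (\<forall>x\<in>V. ph x = 0 \<longrightarrow> x = 0)
    \<and> ph ` family_sum I U \<subseteq> ph ` V"
  using assms
proof (induction I rule: finite_induct)
  case empty
  then show ?case
    using g_submodule_singleton_zero by (intro exI[of _ "{0}"]) (simp add: family_sum_empty)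
next
  case (insert i I)
  then obtain V where V: "g_submodule smM fM V" and inj: "\<forall>x\<in>V. ph x = 0 \<longrightarrow> x = 0"
    and im: "ph ` family_sum I U \<subseteq> ph ` V"
    by auto
  have simple: "simple_g_submodule smM fM (U i)"
    using insert.prems by simp
  define V' where "V' = {v + u | v u. v \<in> V \<and> u \<in> U i}"
  have im': "ph ` family_sum (insert i I) U \<subseteq> ph ` V'"
    unfolding V'_def using image_family_sum_insert[OF insert.hyps im] .
  show ?case
  proof (cases "\<forall>x\<in>V'. ph x = 0 \<longrightarrow> x = 0")
    case True
    moreover have "g_submodule smM fM V'"
      unfolding V'_def using simple by (intro g_submodule_plus[OF V]) (simp add: simple_g_submodule_def)
    ultimately show ?thesis
      using im' by blast
  next
    case False
    then have "ph ` V' \<subseteq> ph ` V"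
      unfolding V'_def by (rule image_plus_simple_subset[OF V inj simple])
    with im' have "ph ` family_sum (insert i I) U \<subseteq> ph ` V"
      by (rule order.trans)
    with V inj show ?thesis
      by blast
  qed
qed

lemma invariant_lift:
  assumes "finite I" "\<forall>i\<in>I. simple_g_submodule smM fM (U i)" "c \<in> family_sum I U"
    and "\<And>d. fW d (ph c) = 0"
  obtains c' where "\<And>d. fM d c' = 0" "ph c' = ph c"
proof -
  obtain V where V: "g_submodule smM fM V" and inj: "\<forall>x\<in>V. ph x = 0 \<longrightarrow> x = 0"
    and im: "ph ` family_sum I U \<subseteq> ph ` V"
    using injective_submodule_with_same_image[OF assms(1,2)] by blast
  obtain c' where c': "c' \<in> V" "ph c' = ph c"
    using im assms(3) by (metis image_eqI imageE subsetD)
  have "fM d c' = 0" for d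
    using inj g_submodule_act[OF V c'(1)] ph_act c'(2) assms(4) by simp
  then show ?thesis
    using c'(2) that by blast
qed

end

section \<open>Function modules over a semisimple module\<close>

definition pointwise :: "('a \<Rightarrow> 's \<Rightarrow> 's) \<Rightarrow> 'a \<Rightarrow> ('n \<Rightarrow> 's) \<Rightarrow> 'n \<Rightarrow> 's" where
  "pointwise sm a c = (\<lambda>x. sm a (c x))"

definition fun_single :: "'n \<Rightarrow> 's::zero \<Rightarrow> 'n \<Rightarrow> 's" where
  "fun_single v u = (\<lambda>x. if x = v then u else 0)"

lemma sum_fun_apply: "(\<Sum>i\<in>F. f i) x = (\<Sum>i\<in>F. f i x)"
  by (induction F rule: infinite_finite_induct) auto

lemma fun_single_apply: "fun_single v u x = (if x = v then u else 0)"
  by (simp add: fun_single_def)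

lemma g_submodule_fun_single:
  fixes sm :: "'a::comm_ring_1 \<Rightarrow> 's::ab_group_add \<Rightarrow> 's" and v :: 'n
  assumes U: "g_submodule sm f U" and "\<And>a. sm a 0 = 0" and "\<And>d. f d 0 = 0"
  shows "g_submodule (pointwise sm) (pointwise f) (fun_single v ` U)"
proof -
  have single_0: "0 = fun_single v (0::'s)"
    and single_add: "\<And>u u' :: 's. fun_single v u + fun_single v u' = fun_single v (u + u')"
    and single_minus: "\<And>u :: 's. - fun_single v u = fun_single v (- u)"
    and single_smult: "\<And>a u. pointwise sm a (fun_single v u) = fun_single v (sm a u)"
    and single_act: "\<And>d u. pointwise f d (fun_single v u) = fun_single v (f d u)"
    using assms(2,3) by (auto simp: fun_eq_iff fun_single_apply pointwise_def)
  show ?thesis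
    unfolding g_submodule_def
  proof (intro conjI ballI allI)
    show "0 \<in> fun_single v ` U"
      using single_0 g_submodule_zero[OF U] by simp
  qed (auto simp: single_add single_minus single_smult single_act g_submoduleD[OF U])
qed

lemma g_submodule_eval:
  fixes sm :: "'a::comm_ring_1 \<Rightarrow> 's::ab_group_add \<Rightarrow> 's" and v :: 'n
  assumes W: "g_submodule (pointwise sm) (pointwise f) W"
  shows "g_submodule sm f ((\<lambda>c. c v) ` W)"
  unfolding g_submodule_def
proof (intro conjI ballI allI)
  show "0 \<in> (\<lambda>c. c v) ` W"
    using g_submodule_zero[OF W] by (force simp: zero_fun_def)
next
  fix x y assume "x \<in> (\<lambda>c. c v) ` W" "y \<in> (\<lambda>c. c v) ` W"
  then obtain c c' where "c \<in> W" "c' \<in> W" "x = c v" "y = c' v"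
    by blast
  then show "x + y \<in> (\<lambda>c. c v) ` W"
    using g_submodule_add[OF W] by (intro image_eqI[of _ _ "c + c'"]) auto
next
  fix x assume "x \<in> (\<lambda>c. c v) ` W"
  then obtain c where "c \<in> W" "x = c v"
    by blast
  then show "- x \<in> (\<lambda>c. c v) ` W"
    using g_submodule_minus[OF W] by (intro image_eqI[of _ _ "- c"]) auto
next
  fix a x assume "x \<in> (\<lambda>c. c v) ` W"
  then obtain c where "c \<in> W" "x = c v"
    by blast
  then show "sm a x \<in> (\<lambda>c. c v) ` W"
    using g_submodule_smult[OF W] by (intro image_eqI[of _ _ "pointwise sm a c"]) (auto simp: pointwise_def)
next
  fix d x assume "x \<in> (\<lambda>c. c v) ` W"
  then obtain c where "c \<in> W" "x = c v"
    by blast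
  then show "f d x \<in> (\<lambda>c. c v) ` W"
    using g_submodule_act[OF W] by (intro image_eqI[of _ _ "pointwise f d c"]) (auto simp: pointwise_def)
qed

lemma simple_g_submodule_fun_single:
  fixes sm :: "'a::comm_ring_1 \<Rightarrow> 's::ab_group_add \<Rightarrow> 's" and v :: 'n
  assumes U: "simple_g_submodule sm f U" and "\<And>a. sm a 0 = 0" and "\<And>d. f d 0 = 0"
  shows "simple_g_submodule (pointwise sm) (pointwise f) (fun_single v ` U)"
  unfolding simple_g_submodule_def
proof (intro conjI allI impI)
  have U_sub: "g_submodule sm f U" and U_ne: "U \<noteq> {0}"
    and U_min: "\<And>W. g_submodule sm f W \<Longrightarrow> W \<subseteq> U \<Longrightarrow> W = {0} \<or> W = U"
    using U unfolding simple_g_submodule_def by blast+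
  show "g_submodule (pointwise sm) (pointwise f) (fun_single v ` U)"
    using g_submodule_fun_single[OF U_sub assms(2,3)] .
  obtain u where "u \<in> U" "u \<noteq> 0"
    using U_ne g_submodule_zero[OF U_sub] by blast
  then show "fun_single v ` U \<noteq> {0}"
    by (metis (mono_tags, lifting) fun_single_apply image_eqI singletonD zero_fun_def)
  fix W assume "g_submodule (pointwise sm) (pointwise f) W \<and> W \<subseteq> fun_single v ` U"
  then have W: "g_submodule (pointwise sm) (pointwise f) W" and W_sub: "W \<subseteq> fun_single v ` U"
    by blast+
  have W_single: "c = fun_single v (c v)" if "c \<in> W" for c
    using W_sub that by (auto simp: fun_single_apply)
  have "(\<lambda>c. c v) ` W \<subseteq> U"
    using W_sub by (auto simp: fun_single_apply)
  then have "(\<lambda>c. c v) ` W = {0} \<or> (\<lambda>c. c v) ` W = U"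
    using U_min g_submodule_eval[OF W] by blast
  then show "W = {0} \<or> W = fun_single v ` U"
  proof
    assume "(\<lambda>c. c v) ` W = {0}"
    have "c = 0" if "c \<in> W" for c
    proof -
      have "c v = 0"
        using that \<open>(\<lambda>c. c v) ` W = {0}\<close> by blast
      then show ?thesis
        using W_single[OF that] by (simp add: fun_eq_iff fun_single_apply)
    qed
    then show ?thesis
      using g_submodule_zero[OF W] by blast
  next
    assume "(\<lambda>c. c v) ` W = U"
    then have "fun_single v ` U \<subseteq> W"
      using W_single by auto
    then show ?thesis
      using W_sub by blast
  qed
qed

lemma semisimple_decomposition:
  assumes "g_semisimple sm f"
  obtains \<M> F x where "\<forall>U\<in>\<M>. simple_g_submodule sm f U"
    and "\<And>s. finite (F s)" "\<And>s. F s \<subseteq> \<M>" "\<And>s U. U \<in> F s \<Longrightarrow> x s U \<in> U"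
    and "\<And>s. s = (\<Sum>U\<in>F s. x s U)"
proof -
  obtain \<M> where "\<forall>U\<in>\<M>. simple_g_submodule sm f U"
    and "\<forall>s. \<exists>F x. finite F \<and> F \<subseteq> \<M> \<and> (\<forall>U\<in>F. x U \<in> U) \<and> s = (\<Sum>U\<in>F. x U)"
    using assms unfolding g_semisimple_def dsum_decomp_def by (metis UNIV_I)
  moreover from this(2) obtain F x
    where "\<forall>s. finite (F s) \<and> F s \<subseteq> \<M> \<and> (\<forall>U\<in>F s. x s U \<in> U) \<and> s = (\<Sum>U\<in>F s. x s U)"
    by metis
  ultimately show ?thesis
    using that[of \<M> F x] by blast
qed

lemma semisimple_fun_in_family_sum:
  fixes sm :: "'a::comm_ring_1 \<Rightarrow> 's::ab_group_add \<Rightarrow> 's" and r :: "'n \<Rightarrow> 's"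
  assumes "g_semisimple sm f" "\<And>a. sm a 0 = 0" "\<And>d. f d 0 = 0" "finite X"
  obtains I UU c where "finite (I :: ('n \<times> 's set) set)"
    "\<forall>p\<in>I. simple_g_submodule (pointwise sm) (pointwise f) (UU p)"
    "c \<in> family_sum I UU" "\<And>v. v \<in> X \<Longrightarrow> c v = r v"
proof -
  obtain \<M> F x where simple: "\<forall>U\<in>\<M>. simple_g_submodule sm f U"
    and F: "\<And>s. finite (F s)" "\<And>s. F s \<subseteq> \<M>" "\<And>s U. U \<in> F s \<Longrightarrow> x s U \<in> U"
    and dec: "\<And>s. s = (\<Sum>U\<in>F s. x s U)"
    using semisimple_decomposition[OF assms(1)] by metis
  define I where "I = (SIGMA v:X. F (r v))"
  define UU where "UU p = fun_single (fst p) ` snd p" for p :: "'n \<times> 's set"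
  define c where "c = (\<Sum>p\<in>I. fun_single (fst p) (x (r (fst p)) (snd p)))"
  have "finite I"
    unfolding I_def using assms(4) F(1) by simp
  moreover have "\<forall>p\<in>I. simple_g_submodule (pointwise sm) (pointwise f) (UU p)"
  proof
    fix p assume "p \<in> I"
    then obtain v U where "p = (v, U)" "U \<in> \<M>"
      unfolding I_def using F(2) by blast
    then show "simple_g_submodule (pointwise sm) (pointwise f) (UU p)"
      unfolding UU_def using simple assms(2,3) by (simp add: simple_g_submodule_fun_single)
  qed
  moreover have "c \<in> family_sum I UU"
    unfolding family_sum_def c_def I_def UU_def using F(3) by auto
  moreover have "c v = r v" if "v \<in> X" for v
  proof -
    have "c v = (\<Sum>v'\<in>X. \<Sum>U\<in>F (r v'). fun_single v' (x (r v') U) v)"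
      unfolding c_def I_def sum_fun_apply
      using sum.Sigma[OF assms(4), of "\<lambda>v. F (r v)" "\<lambda>v' U. fun_single v' (x (r v') U) v"] F(1)
      by (simp add: case_prod_beta)
    also have "\<dots> = (\<Sum>v'\<in>X. if v' = v then r v else 0)"
      by (rule sum.cong) (auto simp: fun_single_apply dec[symmetric])
    also have "\<dots> = r v"
      using that assms(4) by simp
    finally show ?thesis .
  qed
  ultimately show ?thesis
    by (rule that)
qed

section \<open>Invariants of (S^0, g)-modules\<close>

locale S0_g_setting = graded_ring sigma Sgr
  for sigma :: "'a::comm_ring_1 \<Rightarrow> 's::comm_ring_1" and Sgr :: "nat \<Rightarrow> 's set" +
  fixes phi :: "'g \<Rightarrow> 's \<Rightarrow> 's" and nsc :: "'s \<Rightarrow> 'n::ab_group_add \<Rightarrow> 'n" and psi :: "'g \<Rightarrow> 'n \<Rightarrow> 'n"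
  assumes phi_add: "phi d (x + y) = phi d x + phi d y"
    and phi_graded: "s \<in> Sgr i \<Longrightarrow> phi d s \<in> Sgr i"
    and nsc_module: "module_on (Sgr 0) nsc"
    and psi_add: "psi d (m + m') = psi d m + psi d m'"
    and leibniz: "s \<in> Sgr 0 \<Longrightarrow> psi d (nsc s m) = nsc (phi d s) m + nsc s (psi d m)"
begin

lemma nsc_assoc: "r \<in> Sgr 0 \<Longrightarrow> s \<in> Sgr 0 \<Longrightarrow> nsc (r * s) m = nsc r (nsc s m)"
  and nsc_one: "nsc 1 m = m"
  and nsc_add_left: "r \<in> Sgr 0 \<Longrightarrow> s \<in> Sgr 0 \<Longrightarrow> nsc (r + s) m = nsc r m + nsc s m"
  and nsc_add_right: "r \<in> Sgr 0 \<Longrightarrow> nsc r (m + m') = nsc r m + nsc r m'"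
  using nsc_module unfolding module_on_def by blast+

lemma nsc_zero_right: "r \<in> Sgr 0 \<Longrightarrow> nsc r 0 = 0"
  using nsc_add_right[of r 0 0] by simp

lemma nsc_sum_right: "finite F \<Longrightarrow> r \<in> Sgr 0 \<Longrightarrow> nsc r (sum g F) = (\<Sum>i\<in>F. nsc r (g i))"
  by (induction F rule: finite_induct) (simp_all add: nsc_zero_right nsc_add_right)

lemma psi_zero: "psi d 0 = 0"
  using psi_add[of d 0 0] by simp

lemma psi_sum: "finite F \<Longrightarrow> psi d (sum g F) = (\<Sum>i\<in>F. psi d (g i))"
  by (induction F rule: finite_induct) (simp_all add: psi_zero psi_add)

lemma phi_deg0_part: "phi d (deg0_part Sgr s) = deg0_part Sgr (phi d s)"
  using deg0_part_commute[of "phi d"] phi_add phi_graded by metis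

lemma psi_nsc_invariant:
  assumes "r \<in> Sgr 0" "psi d m = 0"
  shows "psi d (nsc r m) = nsc (phi d r) m"
  using leibniz[OF assms(1)] assms nsc_zero_right by simp

definition deg0_action :: "'s \<Rightarrow> 'n \<Rightarrow> 'n" where
  "deg0_action s m = nsc (deg0_part Sgr s) m"

lemma ring_module_deg0_action: "ring_module deg0_action"
  unfolding ring_module_def module_on_def deg0_action_def
  by (simp add: deg0_part_add deg0_part_mult deg0_part_deg0 deg0_part_one
      nsc_assoc nsc_one nsc_add_left nsc_add_right)

lemma lin_span_deg0_action_UNIV:
  assumes "fin_type_over (Sgr 0) nsc UNIV"
  obtains F where "finite F" "UNIV \<subseteq> lin_span deg0_action F"
proof -
  obtain F where F: "finite F" "UNIV = {(\<Sum>f\<in>F. nsc (r f) f) | r. \<forall>f\<in>F. r f \<in> Sgr 0}"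
    using assms unfolding fin_type_over_def by blast
  have "m \<in> lin_span deg0_action F" for m
  proof -
    obtain r where r: "\<forall>f\<in>F. r f \<in> Sgr 0" "m = (\<Sum>f\<in>F. nsc (r f) f)"
      using F(2) by blast
    then have "m = (\<Sum>f\<in>F. deg0_action (r f) f)"
      unfolding deg0_action_def by (simp add: deg0_part_id)
    then show ?thesis
      using F(1) by (simp add: lin_span_sum lin_span.smult lin_span.base)
  qed
  then show ?thesis
    using F(1) that by blast
qed

definition combination :: "'n set \<Rightarrow> ('n \<Rightarrow> 's) \<Rightarrow> 'n" where
  "combination X c = (\<Sum>v\<in>X. nsc (deg0_part Sgr (c v)) v)"

lemma equivariant_map_combination:
  assumes "finite X" "X \<subseteq> invariants psi UNIV"
  shows "equivariant_map (pointwise (\<lambda>a s. sigma a * s)) (pointwise phi)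
    (\<lambda>a m. nsc (sigma a) m) psi (combination X)"
proof
  fix c c' :: "'n \<Rightarrow> 's"
  show "combination X (c + c') = combination X c + combination X c'"
    unfolding combination_def by (simp add: deg0_part_add nsc_add_left deg0_part_deg0 sum.distrib)
next
  fix a c
  show "combination X (pointwise (\<lambda>a s. sigma a * s) a c) = nsc (sigma a) (combination X c)"
    unfolding combination_def pointwise_def
    by (simp add: deg0_part_mult deg0_part_id sigma_deg0 nsc_assoc deg0_part_deg0
        nsc_sum_right[OF assms(1) sigma_deg0])
next
  fix d c
  have "psi d v = 0" if "v \<in> X" for v
    using assms(2) that unfolding invariants_def by blast
  then show "combination X (pointwise phi d c) = psi d (combination X c)"
    unfolding combination_def pointwise_def
    by (simp add: psi_sum[OF assms(1)] psi_nsc_invariant deg0_part_deg0 phi_deg0_part)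
qed (auto simp: pointwise_def distrib_left phi_add)

lemma invariant_generators:
  assumes "noetherian_ring (UNIV :: 's set)" "fin_type_over (Sgr 0) nsc UNIV"
  obtains X where "finite X" "X \<subseteq> invariants psi UNIV"
    "invariants psi UNIV \<subseteq> lin_span deg0_action X"
proof -
  obtain F where "finite F" "UNIV \<subseteq> lin_span deg0_action F"
    using lin_span_deg0_action_UNIV[OF assms(2)] by blast
  then have "invariants psi UNIV \<subseteq> lin_span deg0_action F"
    by blast
  then show ?thesis
    using ring_module.noetherian_lin_span_finitely_generated[OF ring_module_deg0_action assms(1)
        \<open>finite F\<close>] that by blast
qed

lemma invariant_coefficients:
  assumes "g_semisimple (\<lambda>a s. sigma a * s) phi" "finite X" "X \<subseteq> invariants psi UNIV"
    and "w \<in> invariants psi UNIV" "w \<in> lin_span deg0_action X"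
  obtains r where "\<forall>v\<in>X. r v \<in> invariants phi (Sgr 0)" "w = (\<Sum>v\<in>X. nsc (r v) v)"
proof -
  interpret equivariant_map "pointwise (\<lambda>a s. sigma a * s)" "pointwise phi"
    "\<lambda>a m. nsc (sigma a) m" psi "combination X"
    using equivariant_map_combination[OF assms(2,3)] .
  obtain r where "w = (\<Sum>v\<in>X. deg0_action (r v) v)"
    using assms(5) ring_module.lin_span_finite_eq[OF ring_module_deg0_action assms(2)] by blast
  then have w: "w = combination X r"
    unfolding combination_def deg0_action_def .
  have phi_0: "phi d 0 = 0" for d
    using phi_add[of d 0 0] by simp
  obtain I UU c where "finite (I :: ('n \<times> 's set) set)" "\<forall>p\<in>I. simple_g_submodule (pointwise (\<lambda>a s. sigma a * s))
      (pointwise phi) (UU p)" "c \<in> family_sum I UU" and c: "\<And>v. v \<in> X \<Longrightarrow> c v = r v"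
    using semisimple_fun_in_family_sum[OF assms(1) mult_zero_right phi_0 assms(2), of r] by blast
  moreover have "combination X c = w"
    unfolding w combination_def using c by simp
  moreover have "psi d w = 0" for d
    using assms(4) unfolding invariants_def by blast
  ultimately obtain c' where c': "\<And>d. pointwise phi d c' = 0" "combination X c' = w"
    using invariant_lift by metis
  have "phi d (deg0_part Sgr (c' v)) = 0" for d v
    using fun_cong[OF c'(1), of d v] by (simp add: phi_deg0_part pointwise_def deg0_part_zero)
  then have "\<forall>v\<in>X. deg0_part Sgr (c' v) \<in> invariants phi (Sgr 0)"
    unfolding invariants_def by (simp add: deg0_part_deg0)
  then show ?thesis
    using c'(2) unfolding combination_def by (intro that[of "\<lambda>v. deg0_part Sgr (c' v)"]) auto
qed

lemma invariant_combination:
  assumes "finite X" "X \<subseteq> invariants psi UNIV" "\<forall>v\<in>X. r v \<in> invariants phi (Sgr 0)"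
  shows "(\<Sum>v\<in>X. nsc (r v) v) \<in> invariants psi UNIV"
proof -
  have "nsc 0 m = 0" for m
    using nsc_add_left[OF zero_graded zero_graded, of m] by simp
  then have "psi d (nsc (r v) v) = 0" if "v \<in> X" for d v
    using assms(2,3) that psi_nsc_invariant unfolding invariants_def by auto
  then show ?thesis
    unfolding invariants_def by (simp add: psi_sum[OF assms(1)])
qed

theorem fin_type_over_invariants:
  assumes "noetherian_ring (UNIV :: 's set)" "fin_type_over (Sgr 0) nsc UNIV"
    and "g_semisimple (\<lambda>a s. sigma a * s) phi"
  shows "fin_type_over (invariants phi (Sgr 0)) nsc (invariants psi UNIV)"
proof -
  obtain X where X: "finite X" "X \<subseteq> invariants psi UNIV"
    and span: "invariants psi UNIV \<subseteq> lin_span deg0_action X"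
    using invariant_generators[OF assms(1,2)] by blast
  have "invariants psi UNIV = {(\<Sum>v\<in>X. nsc (r v) v) | r. \<forall>v\<in>X. r v \<in> invariants phi (Sgr 0)}"
  proof (intro equalityI subsetI)
    fix w assume "w \<in> invariants psi UNIV"
    then show "w \<in> {(\<Sum>v\<in>X. nsc (r v) v) | r. \<forall>v\<in>X. r v \<in> invariants phi (Sgr 0)}"
      using invariant_coefficients[OF assms(3) X] span by blast
  qed (use invariant_combination[OF X] in blast)
  then show ?thesis
    unfolding fin_type_over_def using X by blast
qed

end

text \<open>Only the noetherianity and semisimplicity of S enter the argument.\<close>

theorem mainTheorem2:
  fixes iota :: "'k::comm_ring_1 \<Rightarrow> 'a::comm_ring_1"
    and gsc :: "'a \<Rightarrow> 'g::ab_group_add \<Rightarrow> 'g"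
    and br :: "'g \<Rightarrow> 'g \<Rightarrow> 'g"
    and alpha :: "'g \<Rightarrow> 'a \<Rightarrow> 'a"
    and sigma :: "'a \<Rightarrow> 's::comm_ring_1"
    and Sgr :: "nat \<Rightarrow> 's set"
    and phi :: "'g \<Rightarrow> 's \<Rightarrow> 's"
    and nsc :: "'s \<Rightarrow> 'n::ab_group_add \<Rightarrow> 'n"
    and psi :: "'g \<Rightarrow> 'n \<Rightarrow> 'n"
  assumes algebroid: "lie_algebroid iota gsc br alpha"
    and S_alg: "graded_g_algebra iota gsc br alpha sigma Sgr phi"
    and S_noeth: "noetherian_ring (UNIV :: 's set)"
    and S_ss: "g_semisimple (\<lambda>a s. sigma a * s) phi"
    and S0bar_noeth: "noetherian_ring (invariants phi (Sgr 0))"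
    and N_mod: "S0_g_module iota gsc br alpha sigma Sgr phi nsc psi"
    and N_fin: "fin_type_over (Sgr 0) nsc UNIV"
    and N_ss: "g_semisimple (\<lambda>a n. nsc (sigma a) n) psi"
  shows "fin_type_over (invariants phi (Sgr 0)) nsc (invariants psi UNIV)"
proof -
  interpret S0_g_setting sigma Sgr phi nsc psi
    using S_alg N_mod
    unfolding S0_g_setting_def S0_g_setting_axioms_def graded_ring_def
      graded_g_algebra_def S0_g_module_def g_module_def
    by auto
  show ?thesis
    using fin_type_over_invariants[OF S_noeth N_fin S_ss] .
qed

end
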